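(* Let $Q$ be a blooming quantale and $\mathcal{F}\in\operatorname{mF}(Q)$. The following are equivalent: (a) $\mathcal{F}$ is normal over $Q$; (b) $\mathcal{F}$ is locally solid; (c) $\mathcal{F}$ is normal over every blooming $Q$-module.
   Context: A quantale is a poset $Q$ with all nonempty joins $\sum$ (no bottom required), top $1$, commutative associative multiplication with unit $1$ distributing over nonempty joins; a $Q$-module is a poset $M$ with all nonempty joins and an associative unital action distributing over nonempty joins in each variable ($Q$ is a module over itself). An m-filter is a subset of $Q$ containing $1$, upward closed and closed under multiplication. Write $x\le^*\sum_{i\in I}x_i$ if $x\le\sum_{i\in I_0}x_i$ for some finite nonempty $I_0\subseteq I$. $\mathcal{N}$ is normal over $M$ if for all $s\in\mathcal{N}$, $m\in M$ and families $(m_i)_{i\in I}$ in $M$ with $sm\le\sum_im_i$, there exist families $(m'_j)_{j\in J}$ in $M$ and $(s_j)_{j\in J}$ in $\mathcal{N}$ with $m\le\sum_jm'_j$ and $s_jm'_j\le^*\sum_im_i$ for all $j$. $\mathcal{F}$ is locally solid if there is a nonempty $W\subseteq Q$ with $\sum W=1$ such that for every $w\in W$ and every nonempty family $(x_i)$ with $\sum_ix_i\in\mathcal{F}$ there is $t\in\mathcal{F}$ with $tw\le^*\sum_ix_i$. Suspension: order nonempty subsets of a complete semilattice $L$ by $S\le T$ iff each $s\in S$ satisfies $s\le^*\sum T$; $\Sigma L$ is the poset of equivalence classes, $\sigma_L(S)=\sum S$; $\Sigma Q$ has product $S\cdot T=\{st\}$ and acts on $\Sigma M$ by $S\cdot A=\{sa\}$.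 A left adjoint of $\sigma_L$ is an order-preserving $\sigma_L^\flat$ with $\sigma_L^\flat(x)\le S\iff x\le\sigma_L(S)$. $Q$ is blooming if $\sigma_Q^\flat$ exists and $\sigma_Q^\flat(ab)=\sigma_Q^\flat(a)\cdot\sigma_Q^\flat(b)$; for blooming $Q$, $M$ is blooming if $\sigma_M^\flat$ exists and $\sigma_M^\flat(qm)=\sigma_Q^\flat(q)\cdot\sigma_M^\flat(m)$. *)

theory Defs
  imports Main
begin

definition poset_on :: "'a set \<Rightarrow> ('a \<Rightarrow> 'a \<Rightarrow> bool) \<Rightarrow> bool" where
  "poset_on C le \<longleftrightarrow>
     (\<forall>x\<in>C. le x x) \<and>
     (\<forall>x\<in>C. \<forall>y\<in>C. le x y \<and> le y x \<longrightarrow> x = y) \<and>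
     (\<forall>x\<in>C. \<forall>y\<in>C. \<forall>z\<in>C. le x y \<and> le y z \<longrightarrow> le x z)"

definition nejoins_on :: "'a set \<Rightarrow> ('a \<Rightarrow> 'a \<Rightarrow> bool) \<Rightarrow> ('a set \<Rightarrow> 'a) \<Rightarrow> bool" where
  "nejoins_on C le js \<longleftrightarrow>
     (\<forall>A. A \<noteq> {} \<and> A \<subseteq> C \<longrightarrow>
        js A \<in> C \<and> (\<forall>a\<in>A. le a (js A)) \<and>
        (\<forall>y\<in>C. (\<forall>a\<in>A. le a y) \<longrightarrow> le (js A) y))"

definition complete_semilattice :: "'a set \<Rightarrow> ('a \<Rightarrow> 'a \<Rightarrow> bool) \<Rightarrow> ('a set \<Rightarrow> 'a) \<Rightarrow> bool" where
  "complete_semilattice C le js \<longleftrightarrow> poset_on C le \<and> nejoins_on C le js"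

definition quantale ::
  "'a set \<Rightarrow> ('a \<Rightarrow> 'a \<Rightarrow> bool) \<Rightarrow> ('a set \<Rightarrow> 'a) \<Rightarrow> ('a \<Rightarrow> 'a \<Rightarrow> 'a) \<Rightarrow> 'a \<Rightarrow> bool" where
  "quantale Q le js mult one \<longleftrightarrow>
     complete_semilattice Q le js \<and>
     one \<in> Q \<and> (\<forall>x\<in>Q. le x one) \<and>
     (\<forall>x\<in>Q. \<forall>y\<in>Q. mult x y \<in> Q) \<and>
     (\<forall>x\<in>Q. \<forall>y\<in>Q. \<forall>z\<in>Q. mult (mult x y) z = mult x (mult y z)) \<and>
     (\<forall>x\<in>Q. \<forall>y\<in>Q. mult x y = mult y x) \<and>
     (\<forall>x\<in>Q. mult one x = x) \<and>
     (\<forall>x\<in>Q. \<forall>A. A \<noteq> {} \<and> A \<subseteq> Q \<longrightarrow> mult x (js A) = js ((mult x) ` A))"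

definition qmodule ::
  "'a set \<Rightarrow> ('a \<Rightarrow> 'a \<Rightarrow> bool) \<Rightarrow> ('a set \<Rightarrow> 'a) \<Rightarrow> ('a \<Rightarrow> 'a \<Rightarrow> 'a) \<Rightarrow> 'a \<Rightarrow>
   'm set \<Rightarrow> ('m \<Rightarrow> 'm \<Rightarrow> bool) \<Rightarrow> ('m set \<Rightarrow> 'm) \<Rightarrow> ('a \<Rightarrow> 'm \<Rightarrow> 'm) \<Rightarrow> bool" where
  "qmodule Q le js mult one M leM jsM act \<longleftrightarrow>
     quantale Q le js mult one \<and>
     complete_semilattice M leM jsM \<and>
     (\<forall>q\<in>Q. \<forall>m\<in>M. act q m \<in> M) \<and>
     (\<forall>p\<in>Q. \<forall>q\<in>Q. \<forall>m\<in>M. act (mult p q) m = act p (act q m)) \<and>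
     (\<forall>m\<in>M. act one m = m) \<and>
     (\<forall>q\<in>Q. \<forall>A. A \<noteq> {} \<and> A \<subseteq> M \<longrightarrow> act q (jsM A) = jsM ((act q) ` A)) \<and>
     (\<forall>m\<in>M. \<forall>B. B \<noteq> {} \<and> B \<subseteq> Q \<longrightarrow> act (js B) m = jsM ((\<lambda>q. act q m) ` B))"

definition mfilter :: "'a set \<Rightarrow> ('a \<Rightarrow> 'a \<Rightarrow> bool) \<Rightarrow> ('a \<Rightarrow> 'a \<Rightarrow> 'a) \<Rightarrow> 'a \<Rightarrow> 'a set \<Rightarrow> bool" where
  "mfilter Q le mult one F \<longleftrightarrow>
     F \<subseteq> Q \<and> one \<in> F \<and>
     (\<forall>x\<in>F. \<forall>y\<in>Q. le x y \<longrightarrow> y \<in> F) \<and>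
     (\<forall>x\<in>F. \<forall>y\<in>F. mult x y \<in> F)"

text \<open>x \<le>* sum of X: x is below the join of some finite nonempty subfamily.
Families are represented by their sets of members (repetitions are irrelevant for joins).\<close>
definition le_fin :: "('a \<Rightarrow> 'a \<Rightarrow> bool) \<Rightarrow> ('a set \<Rightarrow> 'a) \<Rightarrow> 'a \<Rightarrow> 'a set \<Rightarrow> bool" where
  "le_fin le js x X \<longleftrightarrow> (\<exists>X0. finite X0 \<and> X0 \<noteq> {} \<and> X0 \<subseteq> X \<and> le x (js X0))"

text \<open>Normality of a subset N of Q over a Q-module M. A family ((s_j, m'_j))_{j\<in>J}
is represented as a nonempty set P of pairs.\<close>
definition normal_over ::
  "'a set \<Rightarrow> 'm set \<Rightarrow> ('m \<Rightarrow> 'm \<Rightarrow> bool) \<Rightarrow> ('m set \<Rightarrow> 'm) \<Rightarrow> ('a \<Rightarrow> 'm \<Rightarrow> 'm) \<Rightarrow> bool" where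
  "normal_over N M leM jsM act \<longleftrightarrow>
     (\<forall>s\<in>N. \<forall>m\<in>M. \<forall>X. X \<noteq> {} \<and> X \<subseteq> M \<and> leM (act s m) (jsM X) \<longrightarrow>
        (\<exists>P. P \<noteq> {} \<and> P \<subseteq> N \<times> M \<and> leM m (jsM (snd ` P)) \<and>
             (\<forall>(t, m')\<in>P. le_fin leM jsM (act t m') X)))"

definition locally_solid ::
  "'a set \<Rightarrow> ('a \<Rightarrow> 'a \<Rightarrow> bool) \<Rightarrow> ('a set \<Rightarrow> 'a) \<Rightarrow> ('a \<Rightarrow> 'a \<Rightarrow> 'a) \<Rightarrow> 'a \<Rightarrow> 'a set \<Rightarrow> bool" where
  "locally_solid Q le js mult one F \<longleftrightarrow>
     (\<exists>W. W \<noteq> {} \<and> W \<subseteq> Q \<and> js W = one \<and>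
        (\<forall>w\<in>W. \<forall>X. X \<noteq> {} \<and> X \<subseteq> Q \<and> js X \<in> F \<longrightarrow>
           (\<exists>t\<in>F. le_fin le js (mult t w) X)))"

text \<open>Suspension: preorder on nonempty subsets of C (the quotient \<Sigma>L is handled via
representatives and the induced equivalence).\<close>
definition susp_le :: "('a \<Rightarrow> 'a \<Rightarrow> bool) \<Rightarrow> ('a set \<Rightarrow> 'a) \<Rightarrow> 'a set \<Rightarrow> 'a set \<Rightarrow> bool" where
  "susp_le le js S T \<longleftrightarrow> (\<forall>s\<in>S. le_fin le js s T)"

definition susp_eq :: "('a \<Rightarrow> 'a \<Rightarrow> bool) \<Rightarrow> ('a set \<Rightarrow> 'a) \<Rightarrow> 'a set \<Rightarrow> 'a set \<Rightarrow> bool" where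
  "susp_eq le js S T \<longleftrightarrow> susp_le le js S T \<and> susp_le le js T S"

text \<open>f is a left adjoint of \<sigma>_L (S \<mapsto> join S), given on representatives.\<close>
definition susp_left_adjoint ::
  "'a set \<Rightarrow> ('a \<Rightarrow> 'a \<Rightarrow> bool) \<Rightarrow> ('a set \<Rightarrow> 'a) \<Rightarrow> ('a \<Rightarrow> 'a set) \<Rightarrow> bool" where
  "susp_left_adjoint C le js f \<longleftrightarrow>
     (\<forall>x\<in>C. f x \<noteq> {} \<and> f x \<subseteq> C) \<and>
     (\<forall>x\<in>C. \<forall>y\<in>C. le x y \<longrightarrow> susp_le le js (f x) (f y)) \<and>
     (\<forall>x\<in>C. \<forall>S. S \<noteq> {} \<and> S \<subseteq> C \<longrightarrow> (susp_le le js (f x) S \<longleftrightarrow> le x (js S)))"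

definition blooming_quantale ::
  "'a set \<Rightarrow> ('a \<Rightarrow> 'a \<Rightarrow> bool) \<Rightarrow> ('a set \<Rightarrow> 'a) \<Rightarrow> ('a \<Rightarrow> 'a \<Rightarrow> 'a) \<Rightarrow> 'a \<Rightarrow> bool" where
  "blooming_quantale Q le js mult one \<longleftrightarrow>
     quantale Q le js mult one \<and>
     (\<exists>f. susp_left_adjoint Q le js f \<and>
        (\<forall>a\<in>Q. \<forall>b\<in>Q. susp_eq le js (f (mult a b)) {mult s t | s t. s \<in> f a \<and> t \<in> f b}))"

definition blooming_module ::
  "'a set \<Rightarrow> ('a \<Rightarrow> 'a \<Rightarrow> bool) \<Rightarrow> ('a set \<Rightarrow> 'a) \<Rightarrow> ('a \<Rightarrow> 'a \<Rightarrow> 'a) \<Rightarrow> 'a \<Rightarrow>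
   'm set \<Rightarrow> ('m \<Rightarrow> 'm \<Rightarrow> bool) \<Rightarrow> ('m set \<Rightarrow> 'm) \<Rightarrow> ('a \<Rightarrow> 'm \<Rightarrow> 'm) \<Rightarrow> bool" where
  "blooming_module Q le js mult one M leM jsM act \<longleftrightarrow>
     blooming_quantale Q le js mult one \<and>
     qmodule Q le js mult one M leM jsM act \<and>
     (\<exists>fQ fM. susp_left_adjoint Q le js fQ \<and> susp_left_adjoint M leM jsM fM \<and>
        (\<forall>q\<in>Q. \<forall>m\<in>M. susp_eq leM jsM (fM (act q m)) {act s a | s a. s \<in> fQ q \<and> a \<in> fM m}))"

end

theory Submission
  imports Defs
begin

(*
  (a) implies (b): take W = \<sigma>\<^sup>\<flat>(1). Adjointness gives \<Sum>W = 1, and every w \<in> W satisfies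
  w \<le>* S as soon as 1 \<le> \<Sum>S. Normality applied to (\<Sum>X) 1 \<le> \<Sum>X yields pairs (t, m') with
  1 \<le> \<Sum>m' and t m' \<le>* X; w is below finitely many of the m', and a lower bound t \<in> F of
  the finitely many corresponding t (a product, since F is an m-filter) gives t w \<le>* X.

  (b) implies (c): let s m \<le> \<Sum>X in a blooming module M. Then \<sigma>\<^sup>\<flat>(s) \<sigma>\<^sup>\<flat>(m) \<le> \<sigma>\<^sup>\<flat>(s m) \<le> X
  in the suspension, so s' a \<le>* X for s' \<in> \<sigma>\<^sup>\<flat>(s), a \<in> \<sigma>\<^sup>\<flat>(m). As s \<le> \<Sum>\<sigma>\<^sup>\<flat>(s), the
  latter join lies in F, and local solidity gives t\<^sub>w \<in> F with t\<^sub>w w \<le>* \<sigma>\<^sup>\<flat>(s) for w \<in> W.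
  The family (t\<^sub>w, w a) is then a normality witness: t\<^sub>w (w a) = (t\<^sub>w w) a \<le>* X, and
  m = (\<Sum>W) m \<le> \<Sum>\<^bsub>w,a\<^esub> w a because m \<le> \<Sum>\<sigma>\<^sup>\<flat>(m).

  (c) implies (a): Q is a blooming module over itself.
*)

locale ne_complete_semilattice =
  fixes C :: "'a set" and le :: "'a \<Rightarrow> 'a \<Rightarrow> bool" and js :: "'a set \<Rightarrow> 'a"
  assumes complete_semilattice: "complete_semilattice C le js"
begin

lemma le_refl: "x \<in> C \<Longrightarrow> le x x"
  using complete_semilattice unfolding complete_semilattice_def poset_on_def by blast

lemma le_antisym: "x \<in> C \<Longrightarrow> y \<in> C \<Longrightarrow> le x y \<Longrightarrow> le y x \<Longrightarrow> x = y"
  using complete_semilattice unfolding complete_semilattice_def poset_on_def by blast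

lemma le_trans: "x \<in> C \<Longrightarrow> y \<in> C \<Longrightarrow> z \<in> C \<Longrightarrow> le x y \<Longrightarrow> le y z \<Longrightarrow> le x z"
  using complete_semilattice unfolding complete_semilattice_def poset_on_def by blast

lemma join_closed: "A \<noteq> {} \<Longrightarrow> A \<subseteq> C \<Longrightarrow> js A \<in> C"
  using complete_semilattice unfolding complete_semilattice_def nejoins_on_def by blast

lemma join_upper: "A \<subseteq> C \<Longrightarrow> a \<in> A \<Longrightarrow> le a (js A)"
  using complete_semilattice unfolding complete_semilattice_def nejoins_on_def by blast

lemma join_least:
  assumes "A \<noteq> {}" "A \<subseteq> C" "y \<in> C" "\<And>a. a \<in> A \<Longrightarrow> le a y"
  shows "le (js A) y"
proof -
  have "\<forall>y\<in>C. (\<forall>a\<in>A. le a y) \<longrightarrow> le (js A) y"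
    using complete_semilattice assms(1,2) unfolding complete_semilattice_def nejoins_on_def by blast
  then show ?thesis using assms(3,4) by blast
qed

lemma join_mono: "A \<noteq> {} \<Longrightarrow> A \<subseteq> B \<Longrightarrow> B \<subseteq> C \<Longrightarrow> le (js A) (js B)"
  by (rule join_least) (auto intro: join_closed join_upper)

lemma join_pair_eq: "x \<in> C \<Longrightarrow> y \<in> C \<Longrightarrow> le x y \<Longrightarrow> js {x, y} = y"
  by (rule le_antisym) (auto intro: join_closed join_least join_upper le_refl)

lemma le_le_fin_trans:
  assumes "x \<in> C" "y \<in> C" "X \<subseteq> C" "le x y" "le_fin le js y X"
  shows "le_fin le js x X"
proof -
  obtain X0 where X0: "finite X0" "X0 \<noteq> {}" "X0 \<subseteq> X" "le y (js X0)"
    using assms(5) unfolding le_fin_def by blast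
  then have "le x (js X0)"
    using le_trans[of x y "js X0"] join_closed[of X0] assms(1-4) by blast
  then show ?thesis unfolding le_fin_def using X0 by blast
qed

lemma le_fin_join:
  assumes Y: "finite Y" "Y \<noteq> {}" "Y \<subseteq> C" and "X \<subseteq> C" and le_fin: "\<And>y. y \<in> Y \<Longrightarrow> le_fin le js y X"
  shows "le_fin le js (js Y) X"
proof -
  obtain G where G: "\<And>y. y \<in> Y \<Longrightarrow> finite (G y) \<and> G y \<noteq> {} \<and> G y \<subseteq> X \<and> le y (js (G y))"
    using le_fin unfolding le_fin_def by metis
  define U where "U = \<Union>(G ` Y)"
  have U: "finite U" "U \<noteq> {}" "U \<subseteq> X" "U \<subseteq> C"
    using G Y \<open>X \<subseteq> C\<close> unfolding U_def by auto
  have "le y (js U)" if "y \<in> Y" for y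
  proof -
    have Gy: "G y \<noteq> {}" "G y \<subseteq> C" "le y (js (G y))"
      using G[OF that] \<open>X \<subseteq> C\<close> by auto
    have "G y \<subseteq> U" using that unfolding U_def by blast
    then have "le (js (G y)) (js U)" using join_mono Gy U by blast
    then show ?thesis
      using le_trans[of y "js (G y)" "js U"] Gy that Y join_closed U by blast
  qed
  then have "le (js Y) (js U)"
    using join_least[OF Y(2,3)] join_closed U by blast
  then show ?thesis unfolding le_fin_def using U by blast
qed

lemma susp_le_trans:
  assumes "susp_le le js S T" "susp_le le js T U" "S \<subseteq> C" "T \<subseteq> C" "U \<subseteq> C"
  shows "susp_le le js S U"
  unfolding susp_le_def
proof
  fix s assume "s \<in> S"
  then obtain T0 where T0: "finite T0" "T0 \<noteq> {}" "T0 \<subseteq> T" "le s (js T0)"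
    using assms(1) unfolding susp_le_def le_fin_def by blast
  have "le_fin le js (js T0) U"
    using le_fin_join[OF T0(1,2) _ assms(5)] T0(3) assms(2,4) unfolding susp_le_def by blast
  then show "le_fin le js s U"
    using le_le_fin_trans[of s "js T0" U] T0 assms \<open>s \<in> S\<close> join_closed[of T0] by blast
qed

lemma left_adjoint_le_fin:
  assumes "susp_left_adjoint C le js f" "x \<in> C" "a \<in> f x" "S \<noteq> {}" "S \<subseteq> C" "le x (js S)"
  shows "le_fin le js a S"
  using assms unfolding susp_left_adjoint_def susp_le_def by blast

lemma left_adjoint_unit:
  assumes f: "susp_left_adjoint C le js f" and "x \<in> C"
  shows "le x (js (f x))"
proof -
  have fx: "f x \<noteq> {}" "f x \<subseteq> C" using assms unfolding susp_left_adjoint_def by auto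
  have "susp_le le js (f x) (f x)"
    unfolding susp_le_def le_fin_def using fx by (auto intro!: exI[of _ "{_}"] join_upper)
  then show ?thesis using assms fx unfolding susp_left_adjoint_def by blast
qed

end

definition join_preserving ::
  "'a set \<Rightarrow> ('a set \<Rightarrow> 'a) \<Rightarrow> 'b set \<Rightarrow> ('b set \<Rightarrow> 'b) \<Rightarrow> ('a \<Rightarrow> 'b) \<Rightarrow> bool" where
  "join_preserving C js D jsD g \<longleftrightarrow>
     (\<forall>x\<in>C. g x \<in> D) \<and> (\<forall>A. A \<noteq> {} \<and> A \<subseteq> C \<longrightarrow> g (js A) = jsD (g ` A))"

lemma join_preserving_closed: "join_preserving C js D jsD g \<Longrightarrow> x \<in> C \<Longrightarrow> g x \<in> D"
  unfolding join_preserving_def by blast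

lemma join_preserving_join:
  "join_preserving C js D jsD g \<Longrightarrow> A \<noteq> {} \<Longrightarrow> A \<subseteq> C \<Longrightarrow> g (js A) = jsD (g ` A)"
  unfolding join_preserving_def by blast

context
  fixes C :: "'a set" and le :: "'a \<Rightarrow> 'a \<Rightarrow> bool" and js :: "'a set \<Rightarrow> 'a"
    and D :: "'b set" and leD :: "'b \<Rightarrow> 'b \<Rightarrow> bool" and jsD :: "'b set \<Rightarrow> 'b"
    and g :: "'a \<Rightarrow> 'b"
  assumes C: "ne_complete_semilattice C le js" and D: "ne_complete_semilattice D leD jsD"
    and g: "join_preserving C js D jsD g"
begin

interpretation C: ne_complete_semilattice C le js by (fact C)
interpretation D: ne_complete_semilattice D leD jsD by (fact D)

lemma join_preserving_mono:
  assumes "x \<in> C" "y \<in> C" "le x y"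
  shows "leD (g x) (g y)"
proof -
  have "g y = g (js {x, y})" using C.join_pair_eq assms by simp
  also have "\<dots> = jsD (g ` {x, y})" using join_preserving_join[OF g] assms by simp
  finally have "g y = jsD {g x, g y}" by simp
  then show ?thesis using D.join_upper[of "{g x, g y}" "g x"] join_preserving_closed[OF g] assms by simp
qed

lemma join_preserving_le_fin:
  assumes S: "finite S" "S \<noteq> {}" "S \<subseteq> C" and x: "x \<in> C" "le x (js S)" and "X \<subseteq> D"
    and le_fin: "\<And>s. s \<in> S \<Longrightarrow> le_fin leD jsD (g s) X"
  shows "le_fin leD jsD (g x) X"
proof -
  have gS: "g ` S \<subseteq> D" using join_preserving_closed[OF g] S by blast
  have "leD (g x) (g (js S))" using join_preserving_mono x C.join_closed[OF S(2,3)] by blast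
  moreover have "le_fin leD jsD (jsD (g ` S)) X"
    using D.le_fin_join[of "g ` S" X] S gS \<open>X \<subseteq> D\<close> le_fin by blast
  ultimately show ?thesis
    using D.le_le_fin_trans[of "g x" "g (js S)" X] join_preserving_join[OF g S(2,3)]
      join_preserving_closed[OF g] x C.join_closed[OF S(2,3)] \<open>X \<subseteq> D\<close> by metis
qed

end

locale quantale_on =
  fixes Q :: "'a set" and le :: "'a \<Rightarrow> 'a \<Rightarrow> bool" and js :: "'a set \<Rightarrow> 'a"
    and mult :: "'a \<Rightarrow> 'a \<Rightarrow> 'a" and one :: 'a
  assumes quantale: "quantale Q le js mult one"
begin

sublocale ne_complete_semilattice Q le js
  using quantale by (simp add: ne_complete_semilattice_def quantale_def)

lemma one_closed: "one \<in> Q"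
  using quantale by (simp add: quantale_def)

lemma le_one: "x \<in> Q \<Longrightarrow> le x one"
  using quantale by (simp add: quantale_def)

lemma mult_closed: "x \<in> Q \<Longrightarrow> y \<in> Q \<Longrightarrow> mult x y \<in> Q"
  using quantale by (simp add: quantale_def)

lemma mult_assoc:
  assumes "x \<in> Q" "y \<in> Q" "z \<in> Q"
  shows "mult (mult x y) z = mult x (mult y z)"
proof -
  have "\<forall>x\<in>Q. \<forall>y\<in>Q. \<forall>z\<in>Q. mult (mult x y) z = mult x (mult y z)"
    using quantale unfolding quantale_def by (elim conjE)
  then show ?thesis using assms by blast
qed

lemma mult_comm: "x \<in> Q \<Longrightarrow> y \<in> Q \<Longrightarrow> mult x y = mult y x"
  using quantale by (simp add: quantale_def)

lemma one_mult: "x \<in> Q \<Longrightarrow> mult one x = x"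
  using quantale by (simp add: quantale_def)

lemma mult_join: "x \<in> Q \<Longrightarrow> A \<noteq> {} \<Longrightarrow> A \<subseteq> Q \<Longrightarrow> mult x (js A) = js (mult x ` A)"
  using quantale by (simp add: quantale_def)

lemma join_mult:
  assumes "x \<in> Q" "A \<noteq> {}" "A \<subseteq> Q"
  shows "mult (js A) x = js ((\<lambda>a. mult a x) ` A)"
proof -
  have "mult (js A) x = mult x (js A)" using mult_comm assms join_closed by simp
  also have "\<dots> = js (mult x ` A)" using mult_join assms by simp
  also have "mult x ` A = (\<lambda>a. mult a x) ` A"
    by (rule image_cong[OF refl]) (use assms(3) mult_comm[OF assms(1)] in blast)
  finally show ?thesis .
qed

lemma qmodule_self: "qmodule Q le js mult one Q le js mult"
  unfolding qmodule_def
proof (intro conjI ballI allI impI)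
  show "quantale Q le js mult one" by (fact quantale)
  show "complete_semilattice Q le js" by (fact complete_semilattice)
qed (simp_all add: mult_closed mult_assoc one_mult mult_join join_mult)

end

locale qmodule_on =
  fixes Q :: "'a set" and le :: "'a \<Rightarrow> 'a \<Rightarrow> bool" and js :: "'a set \<Rightarrow> 'a"
    and mult :: "'a \<Rightarrow> 'a \<Rightarrow> 'a" and one :: 'a
    and M :: "'m set" and leM :: "'m \<Rightarrow> 'm \<Rightarrow> bool" and jsM :: "'m set \<Rightarrow> 'm"
    and act :: "'a \<Rightarrow> 'm \<Rightarrow> 'm"
  assumes qmodule: "qmodule Q le js mult one M leM jsM act"
begin

sublocale Q: quantale_on Q le js mult one
  using qmodule by (simp add: quantale_on_def qmodule_def)

sublocale M: ne_complete_semilattice M leM jsM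
  using qmodule by (simp add: ne_complete_semilattice_def qmodule_def)

lemma act_closed: "q \<in> Q \<Longrightarrow> m \<in> M \<Longrightarrow> act q m \<in> M"
  using qmodule by (simp add: qmodule_def)

lemma act_mult:
  assumes "p \<in> Q" "q \<in> Q" "m \<in> M"
  shows "act (mult p q) m = act p (act q m)"
proof -
  have "\<forall>p\<in>Q. \<forall>q\<in>Q. \<forall>m\<in>M. act (mult p q) m = act p (act q m)"
    using qmodule unfolding qmodule_def by (elim conjE)
  then show ?thesis using assms by blast
qed

lemma act_one: "m \<in> M \<Longrightarrow> act one m = m"
  using qmodule by (simp add: qmodule_def)

lemma act_join: "q \<in> Q \<Longrightarrow> A \<noteq> {} \<Longrightarrow> A \<subseteq> M \<Longrightarrow> act q (jsM A) = jsM (act q ` A)"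
  using qmodule by (simp add: qmodule_def)

lemma join_act: "m \<in> M \<Longrightarrow> B \<noteq> {} \<Longrightarrow> B \<subseteq> Q \<Longrightarrow> act (js B) m = jsM ((\<lambda>q. act q m) ` B)"
  using qmodule by (simp add: qmodule_def)

lemma join_preserving_act_left: "m \<in> M \<Longrightarrow> join_preserving Q js M jsM (\<lambda>q. act q m)"
  unfolding join_preserving_def by (simp add: act_closed join_act)

lemma join_preserving_act_right: "q \<in> Q \<Longrightarrow> join_preserving M jsM M jsM (act q)"
  unfolding join_preserving_def by (simp add: act_closed act_join)

lemma act_mono_left: "p \<in> Q \<Longrightarrow> q \<in> Q \<Longrightarrow> le p q \<Longrightarrow> m \<in> M \<Longrightarrow> leM (act p m) (act q m)"
  using join_preserving_mono[OF Q.ne_complete_semilattice_axioms M.ne_complete_semilattice_axioms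
      join_preserving_act_left] .

lemma act_mono_right: "a \<in> M \<Longrightarrow> b \<in> M \<Longrightarrow> leM a b \<Longrightarrow> q \<in> Q \<Longrightarrow> leM (act q a) (act q b)"
  using join_preserving_mono[OF M.ne_complete_semilattice_axioms M.ne_complete_semilattice_axioms
      join_preserving_act_right] .

end

context quantale_on
begin

lemma mult_mono_left: "p \<in> Q \<Longrightarrow> q \<in> Q \<Longrightarrow> le p q \<Longrightarrow> x \<in> Q \<Longrightarrow> le (mult p x) (mult q x)"
  by (rule qmodule_on.act_mono_left[OF qmodule_on.intro[OF qmodule_self]])

lemma join_preserving_mult: "x \<in> Q \<Longrightarrow> join_preserving Q js Q js (mult x)"
  unfolding join_preserving_def by (simp add: mult_closed mult_join)

lemma mult_le_right: "x \<in> Q \<Longrightarrow> y \<in> Q \<Longrightarrow> le (mult x y) y"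
  using mult_mono_left[of x one y] by (simp add: one_closed le_one one_mult)

lemma mult_le_left: "x \<in> Q \<Longrightarrow> y \<in> Q \<Longrightarrow> le (mult x y) x"
  using mult_le_right[of y x] by (simp add: mult_comm)

lemma mfilter_lower_bound:
  assumes F: "mfilter Q le mult one F" and A: "finite A" "A \<noteq> {}" "A \<subseteq> F"
  shows "\<exists>t\<in>F. \<forall>a\<in>A. le t a"
  using A
proof (induction A rule: finite_ne_induct)
  case (singleton a)
  then show ?case using F le_refl unfolding mfilter_def by blast
next
  case (insert a A)
  then obtain t where t: "t \<in> F" "\<forall>b\<in>A. le t b" by auto
  have FQ: "F \<subseteq> Q" and "mult a t \<in> F" using F t insert.prems unfolding mfilter_def by auto
  moreover have "le (mult a t) b" if "b \<in> insert a A" for b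
    using that t insert.prems FQ mult_le_left[of a t] mult_le_right[of a t]
      le_trans[of "mult a t" t b] mult_closed[of a t] by auto
  ultimately show ?case by blast
qed

lemma mfilter_mult_le_fin:
  assumes F: "mfilter Q le mult one F" and P: "P \<subseteq> F \<times> Q" and X: "X \<subseteq> Q"
    and P_le_fin: "\<forall>(s, m)\<in>P. le_fin le js (mult s m) X"
    and w: "w \<in> Q" "le_fin le js w (snd ` P)"
  shows "\<exists>t\<in>F. le_fin le js (mult t w) X"
proof -
  have FQ: "F \<subseteq> Q" using F unfolding mfilter_def by blast
  obtain S where S: "finite S" "S \<noteq> {}" "S \<subseteq> snd ` P" "le w (js S)"
    using w(2) unfolding le_fin_def by blast
  obtain P0 where P0: "P0 \<subseteq> P" "finite P0" "S = snd ` P0"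
    using finite_subset_image[OF S(1,3)] by blast
  have "fst ` P0 \<subseteq> F" using P0(1) P by auto
  then obtain t where t: "t \<in> F" "\<forall>s\<in>fst ` P0. le t s"
    using mfilter_lower_bound[OF F, of "fst ` P0"] P0 S(2) by blast
  have tQ: "t \<in> Q" using t FQ by blast
  have "le_fin le js (mult t m) X" if m: "m \<in> S" for m
  proof -
    obtain s where "(s, m) \<in> P0" using m P0(3) by force
    then have s: "s \<in> Q" "m \<in> Q" "le t s" "le_fin le js (mult s m) X"
      using P0(1) P P_le_fin t FQ by auto
    then show ?thesis
      using le_le_fin_trans[of "mult t m" "mult s m"] mult_mono_left[of t s m] mult_closed tQ X by blast
  qed
  moreover have "S \<subseteq> Q" using S(3) P by force
  ultimately have "le_fin le js (mult t w) X"
    using join_preserving_le_fin[OF ne_complete_semilattice_axioms ne_complete_semilattice_axioms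
        join_preserving_mult[OF tQ], of S] S w X by blast
  then show ?thesis using t by blast
qed

lemma locally_solid_if_normal_over:
  assumes F: "mfilter Q le mult one F" and f: "susp_left_adjoint Q le js f"
    and normal: "normal_over F Q le js mult"
  shows "locally_solid Q le js mult one F"
  unfolding locally_solid_def
proof (intro exI[of _ "f one"] conjI ballI allI impI)
  show W: "f one \<noteq> {}" "f one \<subseteq> Q"
    using f one_closed unfolding susp_left_adjoint_def by auto
  show "js (f one) = one"
  proof (rule le_antisym)
    show "js (f one) \<in> Q" using join_closed W by blast
    then show "le (js (f one)) one" by (rule le_one)
    show "le one (js (f one))" by (rule left_adjoint_unit[OF f one_closed])
  qed (fact one_closed)
next
  fix w X assume w: "w \<in> f one" and X: "X \<noteq> {} \<and> X \<subseteq> Q \<and> js X \<in> F"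
  have FQ: "F \<subseteq> Q" using F unfolding mfilter_def by blast
  have "le (mult (js X) one) (js X)"
    using mult_le_left X FQ one_closed by blast
  then have "\<exists>P. P \<noteq> {} \<and> P \<subseteq> F \<times> Q \<and> le one (js (snd ` P)) \<and>
      (\<forall>(t, m)\<in>P. le_fin le js (mult t m) X)"
    using normal X one_closed unfolding normal_over_def by blast
  then obtain P where P: "P \<noteq> {}" "P \<subseteq> F \<times> Q" "le one (js (snd ` P))"
    and P_le_fin: "\<forall>(t, m)\<in>P. le_fin le js (mult t m) X"
    by blast
  have "snd ` P \<subseteq> Q" using P(2) by auto
  then have "le_fin le js w (snd ` P)"
    using left_adjoint_le_fin[OF f one_closed w] P(1,3) by simp
  moreover have "w \<in> Q" using w f one_closed unfolding susp_left_adjoint_def by blast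
  ultimately show "\<exists>t\<in>F. le_fin le js (mult t w) X"
    using mfilter_mult_le_fin[OF F P(2) _ P_le_fin] X by blast
qed

end

context qmodule_on
begin

lemma left_adjoints_act_le_fin:
  assumes fQ: "susp_left_adjoint Q le js fQ" and fM: "susp_left_adjoint M leM jsM fM"
    and qm: "q \<in> Q" "m \<in> M"
    and lax: "susp_le leM jsM {act s a | s a. s \<in> fQ q \<and> a \<in> fM m} (fM (act q m))"
    and X: "X \<noteq> {}" "X \<subseteq> M" "leM (act q m) (jsM X)"
    and p: "p \<in> Q" "le_fin le js p (fQ q)" and a: "a \<in> fM m"
  shows "le_fin leM jsM (act p a) X"
proof -
  let ?A = "{act s a | s a. s \<in> fQ q \<and> a \<in> fM m}"
  have qm_M: "act q m \<in> M" using act_closed qm by blast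
  have fQq: "fQ q \<subseteq> Q" and fMm: "fM m \<subseteq> M" and fMqm: "fM (act q m) \<subseteq> M"
    using fQ fM qm qm_M unfolding susp_left_adjoint_def by auto
  then have A: "?A \<subseteq> M" using act_closed by blast
  have "susp_le leM jsM (fM (act q m)) X"
    using fM qm_M X unfolding susp_left_adjoint_def by blast
  then have "susp_le leM jsM ?A X"
    using M.susp_le_trans[OF lax _ A fMqm X(2)] by blast
  then have le_fin: "le_fin leM jsM (act s a) X" if "s \<in> fQ q" for s
    using that a unfolding susp_le_def by blast
  obtain S where S: "finite S" "S \<noteq> {}" "S \<subseteq> fQ q" "le p (js S)"
    using p(2) unfolding le_fin_def by blast
  have aM: "a \<in> M" using a fMm by blast
  show ?thesis
  proof (rule join_preserving_le_fin[OF Q.ne_complete_semilattice_axioms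
        M.ne_complete_semilattice_axioms join_preserving_act_left[OF aM]])
    show "S \<subseteq> Q" using S(3) fQq by blast
    show "\<And>s. s \<in> S \<Longrightarrow> le_fin leM jsM (act s a) X" using le_fin S(3) by blast
  qed (use S p(1) X(2) in auto)
qed

lemma le_join_act_left_adjoint:
  assumes W: "W \<noteq> {}" "W \<subseteq> Q" "js W = one" and fM: "susp_left_adjoint M leM jsM fM"
    and m: "m \<in> M"
  shows "leM m (jsM ((\<lambda>(w, a). act w a) ` (W \<times> fM m)))"
proof -
  let ?Z = "(\<lambda>(w, a). act w a) ` (W \<times> fM m)"
  have fMm: "fM m \<noteq> {}" "fM m \<subseteq> M" using fM m unfolding susp_left_adjoint_def by auto
  have Z: "?Z \<noteq> {}" "?Z \<subseteq> M"
    using W(1,2) fMm act_closed by auto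
  have jZ: "jsM ?Z \<in> M" using M.join_closed[OF Z] .
  have "m = act (js W) m" using W(3) act_one[OF m] by simp
  also have "\<dots> = jsM ((\<lambda>w. act w m) ` W)" by (rule join_act[OF m W(1,2)])
  also have "leM \<dots> (jsM ?Z)"
  proof (rule M.join_least)
    show "(\<lambda>w. act w m) ` W \<noteq> {}" "(\<lambda>w. act w m) ` W \<subseteq> M" using W m act_closed by auto
    fix b assume "b \<in> (\<lambda>w. act w m) ` W"
    then obtain w where w: "w \<in> Q" "w \<in> W" and b: "b = act w m" using W by blast
    have jm: "jsM (fM m) \<in> M" using M.join_closed[OF fMm] .
    have "jsM (act w ` fM m) \<in> M"
      using act_join[OF w(1) fMm] act_closed[OF w(1) jm] by simp
    moreover have "leM (act w m) (jsM (act w ` fM m))"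
      using act_mono_right[OF m jm M.left_adjoint_unit[OF fM m] w(1)] act_join[OF w(1) fMm] by simp
    moreover have "act w ` fM m \<subseteq> ?Z" using w(2) by force
    then have "leM (jsM (act w ` fM m)) (jsM ?Z)"
      using M.join_mono[of "act w ` fM m" ?Z] fMm Z by simp
    ultimately show "leM b (jsM ?Z)"
      unfolding b by (rule M.le_trans[OF act_closed[OF w(1) m] _ jZ])
  qed (fact jZ)
  finally show ?thesis .
qed

lemma normal_over_if_locally_solid:
  assumes F: "mfilter Q le mult one F" and solid: "locally_solid Q le js mult one F"
    and fQ: "susp_left_adjoint Q le js fQ" and fM: "susp_left_adjoint M leM jsM fM"
    and lax: "\<And>q m. q \<in> Q \<Longrightarrow> m \<in> M \<Longrightarrow>
      susp_le leM jsM {act s a | s a. s \<in> fQ q \<and> a \<in> fM m} (fM (act q m))"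
  shows "normal_over F M leM jsM act"
  unfolding normal_over_def
proof (intro ballI allI impI)
  fix s m X assume s: "s \<in> F" and m: "m \<in> M" and "X \<noteq> {} \<and> X \<subseteq> M \<and> leM (act s m) (jsM X)"
  then have X: "X \<noteq> {}" "X \<subseteq> M" "leM (act s m) (jsM X)" by blast+
  have FQ: "F \<subseteq> Q" using F unfolding mfilter_def by blast
  have sQ: "s \<in> Q" using s FQ by blast
  have fQs: "fQ s \<noteq> {}" "fQ s \<subseteq> Q" and fMm: "fM m \<noteq> {}" "fM m \<subseteq> M"
    using fQ fM sQ m unfolding susp_left_adjoint_def by auto
  obtain W where W: "W \<noteq> {}" "W \<subseteq> Q" "js W = one"
    and W_solid: "\<forall>w\<in>W. \<forall>Y. Y \<noteq> {} \<and> Y \<subseteq> Q \<and> js Y \<in> F \<longrightarrow> (\<exists>t\<in>F. le_fin le js (mult t w) Y)"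
    using solid unfolding locally_solid_def by blast
  have "js (fQ s) \<in> F"
    using F s Q.join_closed[OF fQs] Q.left_adjoint_unit[OF fQ sQ] unfolding mfilter_def by blast
  then have "\<forall>w\<in>W. \<exists>t. t \<in> F \<and> le_fin le js (mult t w) (fQ s)"
    using W_solid fQs by blast
  then obtain T where T: "\<forall>w\<in>W. T w \<in> F \<and> le_fin le js (mult (T w) w) (fQ s)"
    by (rule bchoice[THEN exE])
  let ?P = "(\<lambda>(w, a). (T w, act w a)) ` (W \<times> fM m)"
  have "\<forall>(t, m')\<in>?P. le_fin leM jsM (act t m') X"
  proof
    fix p assume "p \<in> ?P"
    then obtain w a where w: "w \<in> W" and a: "a \<in> fM m" and p: "p = (T w, act w a)" by auto
    have Tw: "T w \<in> F" "le_fin le js (mult (T w) w) (fQ s)" using T w by blast+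
    have wQ: "w \<in> Q" and TQ: "T w \<in> Q" and aM: "a \<in> M" using w a W(2) Tw(1) FQ fMm(2) by blast+
    have "le_fin leM jsM (act (mult (T w) w) a) X"
      using left_adjoints_act_le_fin[OF fQ fM sQ m lax[OF sQ m] X Q.mult_closed[OF TQ wQ] Tw(2) a] .
    then show "case p of (t, m') \<Rightarrow> le_fin leM jsM (act t m') X"
      unfolding p using act_mult[OF TQ wQ aM] by simp
  qed
  moreover have "snd ` ?P = (\<lambda>(w, a). act w a) ` (W \<times> fM m)"
    by (simp add: image_image case_prod_beta)
  then have "leM m (jsM (snd ` ?P))"
    using le_join_act_left_adjoint[OF W fM m] by simp
  moreover have "?P \<noteq> {}" using W(1) fMm(1) by simp
  moreover have "?P \<subseteq> F \<times> M"
    using T W(2) fMm(2) by (auto intro!: act_closed)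
  ultimately show "\<exists>P. P \<noteq> {} \<and> P \<subseteq> F \<times> M \<and> leM m (jsM (snd ` P)) \<and>
      (\<forall>(t, m')\<in>P. le_fin leM jsM (act t m') X)"
    by (intro exI[of _ ?P] conjI)
qed

end

lemma normal_over_blooming_module_if_locally_solid:
  assumes "blooming_module Q le js mult one M leM jsM act"
    and F: "mfilter Q le mult one F" and solid: "locally_solid Q le js mult one F"
  shows "normal_over F M leM jsM act"
proof -
  obtain fQ fM where qm: "qmodule_on Q le js mult one M leM jsM act"
    and fQ: "susp_left_adjoint Q le js fQ" and fM: "susp_left_adjoint M leM jsM fM"
    and lax: "\<forall>q\<in>Q. \<forall>m\<in>M.
      susp_le leM jsM {act s a | s a. s \<in> fQ q \<and> a \<in> fM m} (fM (act q m))"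
    using assms(1) unfolding blooming_module_def susp_eq_def qmodule_on_def by blast
  show ?thesis
    using lax by (intro qmodule_on.normal_over_if_locally_solid[OF qm F solid fQ fM]) blast
qed

lemma blooming_module_self:
  assumes "blooming_quantale Q le js mult one"
  shows "blooming_module Q le js mult one Q le js mult"
proof -
  obtain f where q: "quantale Q le js mult one" and f: "susp_left_adjoint Q le js f"
    and bloom: "\<forall>a\<in>Q. \<forall>b\<in>Q. susp_eq le js (f (mult a b)) {mult s t | s t. s \<in> f a \<and> t \<in> f b}"
    using assms unfolding blooming_quantale_def by blast
  have "qmodule Q le js mult one Q le js mult"
    using quantale_on.qmodule_self[OF quantale_on.intro[OF q]] .
  then show ?thesis
    unfolding blooming_module_def using assms f bloom by blast
qed

theorem mainTheorem12:
  fixes Q :: "'a set" and le :: "'a \<Rightarrow> 'a \<Rightarrow> bool" and js :: "'a set \<Rightarrow> 'a"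
    and mult :: "'a \<Rightarrow> 'a \<Rightarrow> 'a" and one :: 'a and F :: "'a set"
  assumes "blooming_quantale Q le js mult one"
    and "mfilter Q le mult one F"
  shows "(normal_over F Q le js mult \<longleftrightarrow> locally_solid Q le js mult one F)
    \<and> (locally_solid Q le js mult one F \<longrightarrow>
         (\<forall>(M :: 'm set) leM jsM act. blooming_module Q le js mult one M leM jsM act \<longrightarrow>
            normal_over F M leM jsM act))
    \<and> ((\<forall>(M :: 'a set) leM jsM act. blooming_module Q le js mult one M leM jsM act \<longrightarrow>
            normal_over F M leM jsM act) \<longrightarrow> normal_over F Q le js mult)"
proof -
  obtain f where q: "quantale_on Q le js mult one" and f: "susp_left_adjoint Q le js f"
    using assms(1) unfolding blooming_quantale_def quantale_on_def by blast
  have a_b: "normal_over F Q le js mult \<Longrightarrow> locally_solid Q le js mult one F"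
    by (rule quantale_on.locally_solid_if_normal_over[OF q assms(2) f])
  have b_c: "blooming_module Q le js mult one M leM jsM act \<Longrightarrow>
      locally_solid Q le js mult one F \<Longrightarrow> normal_over F M leM jsM act"
    for M :: "'m set" and leM jsM act
    by (rule normal_over_blooming_module_if_locally_solid[OF _ assms(2)])
  have b_a: "locally_solid Q le js mult one F \<Longrightarrow> normal_over F Q le js mult"
    by (rule normal_over_blooming_module_if_locally_solid[OF blooming_module_self[OF assms(1)] assms(2)])
  show ?thesis using a_b b_a b_c blooming_module_self[OF assms(1)] by blast
qed

end
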